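(* Let $X$ be a random variable with mean $\mu$ whose moment generating function $\mathbb{E}[e^{tX}]$ exists (is finite) for every real $t$. For $n\ge1$ let $\overline X_n=\frac1n\sum_{i=1}^nX_i$, where $X_1,\dots,X_n$ are i.i.d. copies of $X$. Fix $\varepsilon>0$ and set $$\mathcal F(\mu-\varepsilon,\mu)=\inf_{t<0}\mathbb{E}\big[e^{t(X-\mu+\varepsilon)}\big],\qquad \mathcal G(\mu+\varepsilon,\mu)=\inf_{t>0}\mathbb{E}\big[e^{t(X-\mu-\varepsilon)}\big].$$ For $\delta>0$ define $$N_{\mathrm c}(\delta)=\max\left\{\frac{\ln\frac\delta2}{\ln\mathcal F(\mu-\varepsilon,\mu)},\ \frac{\ln\frac\delta2}{\ln\mathcal G(\mu+\varepsilon,\mu)}\right\},$$ and let $N_{\mathrm a}(\delta)$ be the minimum sample size $n$ guaranteeing $\Pr\{|\overline X_n-\mu|<\varepsilon\}>1-\delta$. Then $$\lim_{\delta\to0}\frac{N_{\mathrm c}(\delta)}{N_{\mathrm a}(\delta)}=1.$$ *)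

theory Defs
  imports "HOL-Probability.Probability"
begin

definition sample_mean :: "(nat \<Rightarrow> 'a \<Rightarrow> real) \<Rightarrow> nat \<Rightarrow> 'a \<Rightarrow> real" where
  "sample_mean X n \<omega> = (\<Sum>i<n. X i \<omega>) / real n"

definition chernoff_F :: "'a measure \<Rightarrow> ('a \<Rightarrow> real) \<Rightarrow> real \<Rightarrow> real \<Rightarrow> real" where
  "chernoff_F M Y \<mu> \<epsilon> = (INF t\<in>{..<0::real}. integral\<^sup>L M (\<lambda>\<omega>. exp (t * (Y \<omega> - \<mu> + \<epsilon>))))"

definition chernoff_G :: "'a measure \<Rightarrow> ('a \<Rightarrow> real) \<Rightarrow> real \<Rightarrow> real \<Rightarrow> real" where
  "chernoff_G M Y \<mu> \<epsilon> = (INF t\<in>{0::real<..}. integral\<^sup>L M (\<lambda>\<omega>. exp (t * (Y \<omega> - \<mu> - \<epsilon>))))"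

definition N_c :: "'a measure \<Rightarrow> ('a \<Rightarrow> real) \<Rightarrow> real \<Rightarrow> real \<Rightarrow> real \<Rightarrow> real" where
  "N_c M Y \<mu> \<epsilon> \<delta> = max (ln (\<delta> / 2) / ln (chernoff_F M Y \<mu> \<epsilon>))
                            (ln (\<delta> / 2) / ln (chernoff_G M Y \<mu> \<epsilon>))"

definition N_a :: "'a measure \<Rightarrow> (nat \<Rightarrow> 'a \<Rightarrow> real) \<Rightarrow> real \<Rightarrow> real \<Rightarrow> real \<Rightarrow> nat" where
  "N_a M X \<mu> \<epsilon> \<delta> = (LEAST n::nat. n \<ge> 1 \<and>
     measure M {\<omega> \<in> space M. \<bar>sample_mean X n \<omega> - \<mu>\<bar> < \<epsilon>} > 1 - \<delta>)"

end

theory Submission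
  imports Defs "HOL-Real_Asymp.Real_Asymp"
begin

(*
  Chernoff's bound gives Pr{|mean_n - mu| >= eps} <= F^n + G^n <= 2 R^n with R = max F G,
  hence N_a(delta) <= ln (delta/2) / ln R + 1 = N_c(delta) + 1.

  Conversely, for a sum S_n of n i.i.d. variables with negative mean and Chernoff rate R, the
  upper tail Pr{S_n >= 0} eventually exceeds rho^n for every rho < R.  Let s0 be the largest
  minimiser of the moment generating function phi.  Integrating a tilted kernel gives
    Pr{S_n >= 0} >= exp(-s n c) (phi(s)^n - phi(s - u)^n - exp(-h n c) phi(s + h)^n),
  and for s slightly larger than s0 a second-order bound on phi near s0 makes the first term
  dominate, with phi(s) exp(-s c) arbitrarily close to phi(s0) = R.  So N_a(delta) >= ln delta / ln rho
  for small delta; letting delta -> 0 and then rho -> R gives N_c / N_a -> 1.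
*)

lemma exp_le_one_plus_self_plus_square: "exp x \<le> 1 + x + x\<^sup>2 * (exp x + 1)" for x :: real
proof -
  have "1 - x \<le> exp (-x)"
    using exp_ge_add_one_self[of "-x"] by simp
  then have "(1 - x) * exp x \<le> 1"
    using mult_right_mono[of "1 - x" "exp (-x)" "exp x"] by (simp add: exp_minus)
  then have below: "exp x - 1 \<le> x * exp x"
    by (simp add: algebra_simps)
  have square: "x\<^sup>2 * (exp x + 1) = x * x * exp x + x * x"
    by (simp add: power2_eq_square algebra_simps)
  have "0 \<le> x * x" "0 \<le> x * x * exp x"
    by simp_all
  moreover have "x * exp x - x \<le> x * x * exp x \<or> x * exp x - x \<le> x * x"
  proof (cases "x \<ge> 0")
    case True
    then show ?thesis
      using mult_left_mono[OF below True] by (simp add: right_diff_distrib mult.assoc)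
  next
    case False
    have "x \<le> exp x - 1"
      using exp_ge_add_one_self[of x] by linarith
    then have "x * (exp x - 1) \<le> x * x"
      using False by (intro mult_left_mono_neg) auto
    then show ?thesis
      by (simp add: right_diff_distrib)
  qed
  ultimately show ?thesis
    unfolding square using below by (elim conjE disjE) linarith+
qed

lemma exp_mult_le_quadratic:
  fixes t y :: real
  assumes "\<bar>t\<bar> \<le> 1"
  shows "exp (t * y) \<le> 1 + t * y + 4 * t\<^sup>2 * (exp (2 * y) + exp (-2 * y))"
proof -
  have "t * y \<le> \<bar>y\<bar>"
    using assms abs_mult[of t y] mult_left_le_one_le[of "\<bar>y\<bar>" "\<bar>t\<bar>"] by auto
  then have "exp (t * y) \<le> exp \<bar>y\<bar>"
    by simp
  then have exp_ty: "exp (t * y) + 1 \<le> 2 * exp \<bar>y\<bar>"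
    using one_le_exp_iff[of "\<bar>y\<bar>"] by linarith
  have "(t * y)\<^sup>2 \<le> t\<^sup>2 * (2 * exp \<bar>y\<bar>)"
    using exp_lower_Taylor_quadratic[of "\<bar>y\<bar>"] by (simp add: power_mult_distrib mult_left_mono)
  then have "(t * y)\<^sup>2 * (exp (t * y) + 1) \<le> t\<^sup>2 * (2 * exp \<bar>y\<bar>) * (2 * exp \<bar>y\<bar>)"
    using exp_ty by (intro mult_mono) auto
  also have "\<dots> = 4 * t\<^sup>2 * exp (2 * \<bar>y\<bar>)"
    by (simp flip: exp_add)
  also have "\<dots> \<le> 4 * t\<^sup>2 * (exp (2 * y) + exp (-2 * y))"
    by (intro mult_left_mono) (auto simp: abs_if add_increasing add_increasing2)
  finally show ?thesis
    using exp_le_one_plus_self_plus_square[of "t * y"] by linarith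
qed

lemma exp_second_difference_le:
  fixes s h y :: real
  assumes "\<bar>h\<bar> \<le> 1"
  shows "exp ((s + h) * y) + exp ((s - h) * y)
    \<le> 2 * exp (s * y) + 8 * h\<^sup>2 * (exp ((s + 2) * y) + exp ((s - 2) * y))"
proof -
  have "exp (h * y) + exp (-h * y) \<le> 2 + 8 * h\<^sup>2 * (exp (2 * y) + exp (-2 * y))"
    using exp_mult_le_quadratic[of h y] exp_mult_le_quadratic[of "-h" y] assms by simp
  then have "exp (s * y) * (exp (h * y) + exp (-h * y))
      \<le> exp (s * y) * (2 + 8 * h\<^sup>2 * (exp (2 * y) + exp (-2 * y)))"
    by (intro mult_left_mono) auto
  moreover have exp_shift: "exp ((s + a) * y) = exp (s * y) * exp (a * y)" for a
    by (simp add: distrib_right exp_add)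
  ultimately show ?thesis
    using exp_shift[of h] exp_shift[of "-h"] exp_shift[of 2] exp_shift[of "-2"]
    by (simp add: algebra_simps)
qed

lemma tilted_kernel_le_indicator:
  fixes s u h K x :: real
  assumes "0 \<le> s" "0 \<le> u" "0 \<le> h" "0 \<le> K"
  shows "exp (-s * K) * (exp (s * x) - exp ((s - u) * x) - exp ((s + h) * x - h * K))
    \<le> (if 0 \<le> x then 1 else 0)"
proof (cases "0 \<le> x \<and> x \<le> K")
  case True
  have "exp (-s * K) * (exp (s * x) - exp ((s - u) * x) - exp ((s + h) * x - h * K))
      \<le> exp (-s * K) * exp (s * x)"
    using exp_gt_zero[of "(s - u) * x"] exp_gt_zero[of "(s + h) * x - h * K"]
    by (intro mult_left_mono) (linarith, simp)
  also have "\<dots> = exp (s * (x - K))"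
    by (simp add: right_diff_distrib flip: exp_add)
  also have "\<dots> \<le> 1"
    using True assms by (simp add: mult_nonneg_nonpos)
  finally show ?thesis
    using True by simp
next
  case False
  then have "s * x \<le> (s - u) * x \<or> s * x \<le> (s + h) * x - h * K"
    using assms mult_left_mono[of K x h] mult_right_mono_neg[of 0 u x]
    by (auto simp: algebra_simps not_le)
  then have "exp (s * x) \<le> exp ((s - u) * x) \<or> exp (s * x) \<le> exp ((s + h) * x - h * K)"
    by (simp only: exp_le_cancel_iff)
  then have "exp (s * x) - exp ((s - u) * x) - exp ((s + h) * x - h * K) \<le> 0"
    using exp_gt_zero[of "(s - u) * x"] exp_gt_zero[of "(s + h) * x - h * K"] by linarith
  then have "exp (-s * K) * (exp (s * x) - exp ((s - u) * x) - exp ((s + h) * x - h * K)) \<le> 0"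
    by (rule mult_nonneg_nonpos[OF less_imp_le[OF exp_gt_zero]])
  then show ?thesis
    using False assms by simp
qed

lemma eventually_power_le_power_diff:
  fixes a b d r :: real
  assumes "0 \<le> b" "b < a" "0 \<le> d" "d < a" "0 < r" "r < a"
  shows "eventually (\<lambda>n. r ^ n \<le> a ^ n - b ^ n - d ^ n) sequentially"
proof -
  have a_pos: "0 < a"
    using assms by linarith
  have "eventually (\<lambda>n. (x / a) ^ n < 1 / 3) sequentially" if "0 \<le> x" "x < a" for x
  proof (rule order_tendstoD(2))
    show "(\<lambda>n. (x / a) ^ n) \<longlonglongrightarrow> 0"
      using that a_pos by (intro LIMSEQ_power_zero) simp
  qed simp
  from this[OF assms(1,2)] this[OF assms(3,4)] this[OF less_imp_le[OF assms(5)] assms(6)]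
  show ?thesis
  proof eventually_elim
    case (elim n)
    have "a ^ n * ((r / a) ^ n + (b / a) ^ n + (d / a) ^ n) \<le> a ^ n * 1"
      using elim assms a_pos by (intro mult_left_mono) auto
    then show ?case
      using a_pos by (simp add: power_divide distrib_left)
  qed
qed

lemma exists_largest_minimizer:
  fixes f :: "real \<Rightarrow> real"
  assumes "continuous_on UNIV f" "0 < T"
    and "\<And>t. t \<le> 0 \<Longrightarrow> f 0 \<le> f t" and "\<And>t. T \<le> t \<Longrightarrow> f 0 < f t"
  shows "\<exists>s\<ge>0. (\<forall>t. f s \<le> f t) \<and> (\<forall>t>s. f s < f t)"
proof -
  have cont: "continuous_on {0..T} f"
    using assms(1) by (rule continuous_on_subset) simp
  obtain m where m: "m \<in> {0..T}" "\<And>t. t \<in> {0..T} \<Longrightarrow> f m \<le> f t"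
    using continuous_attains_inf[OF compact_Icc _ cont] assms(2) by auto
  have "f m \<le> f 0"
    using m(2)[of 0] assms(2) by simp
  then have global: "f m \<le> f t" for t
  proof (cases "0 \<le> t \<and> t \<le> T")
    case False
    then show ?thesis
      using \<open>f m \<le> f 0\<close> assms(3)[of t] assms(4)[of t] by linarith
  qed (use m(2) in simp)
  define K where "K = {t \<in> {0..T}. f t = f m}"
  have "closed K"
    unfolding K_def by (rule continuous_closed_preimage_constant[OF cont]) simp
  moreover have "bounded K"
    unfolding K_def by (rule bounded_subset[of "{0..T}"]) auto
  ultimately have "compact K"
    by (simp add: compact_eq_bounded_closed)
  moreover have "K \<noteq> {}"
    using m unfolding K_def by blast
  ultimately obtain s where s: "s \<in> K" "\<And>t. t \<in> K \<Longrightarrow> t \<le> s"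
    by (meson compact_attains_sup)
  show ?thesis
  proof (intro exI[of _ s] conjI allI impI)
    show "0 \<le> s" "f s \<le> f t" for t
      using s(1) global unfolding K_def by auto
    show "f s < f t" if "s < t" for t
    proof (cases "t \<le> T")
      case True
      then have "t \<notin> K"
        using s(2)[of t] that by auto
      then show ?thesis
        using True that s(1) global[of t] unfolding K_def by auto
    next
      case False
      then show ?thesis
        using s(1) global[of 0] assms(4)[of t] unfolding K_def by auto
    qed
  qed
qed

lemma tilting_bounds:
  fixes f :: "real \<Rightarrow> real"
  assumes pos: "\<And>t. 0 < f t" and "0 \<le> s\<^sub>0"
    and minimum: "\<And>t. f s\<^sub>0 \<le> f t" and strict: "\<And>t. s\<^sub>0 < t \<Longrightarrow> f s\<^sub>0 < f t"
    and second_difference: "\<And>h. \<bar>h\<bar> \<le> 1 \<Longrightarrow> f (s\<^sub>0 + h) + f (s\<^sub>0 - h) \<le> 2 * f s\<^sub>0 + C * h\<^sup>2"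
    and "0 < C" "0 < k" "k \<le> 1/2" "8 * C * (s\<^sub>0 + 1) * k \<le> \<eta>"
  defines "c \<equiv> 4 * C * k / f s\<^sub>0"
  shows "f (s\<^sub>0 + k + k) * exp (-k * c) < f (s\<^sub>0 + k)" "f s\<^sub>0 - \<eta> < f (s\<^sub>0 + k) * exp (-(s\<^sub>0 + k) * c)"
proof -
  define m where "m = f s\<^sub>0"
  have m: "0 < m"
    unfolding m_def by (rule pos)
  have c: "m * (k * c) = 4 * C * k\<^sup>2" "m * ((s\<^sub>0 + k) * c) = (s\<^sub>0 + k) * (4 * C * k)"
    using m by (simp_all add: c_def m_def power2_eq_square)
  have less: "m < f (s\<^sub>0 + k)"
    unfolding m_def using \<open>0 < k\<close> by (intro strict) simp
  have "f (s\<^sub>0 + 2 * k) \<le> m + 4 * C * k\<^sup>2"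
    using second_difference[of "2 * k"] minimum[of "s\<^sub>0 - 2 * k"] assms(7,8)
    by (simp add: m_def power_mult_distrib)
  also have "\<dots> \<le> m * exp (k * c)"
    using mult_left_mono[OF exp_ge_add_one_self[of "k * c"], of m] m c(1) by (simp add: distrib_left)
  finally have "f (s\<^sub>0 + k + k) * exp (-k * c) \<le> m"
    by (simp add: exp_minus field_simps flip: add.assoc mult_2)
  then show "f (s\<^sub>0 + k + k) * exp (-k * c) < f (s\<^sub>0 + k)"
    using less by linarith
  have "m * ((s\<^sub>0 + k) * c) \<le> (s\<^sub>0 + 1) * (4 * C * k)"
    unfolding c(2) using assms(6-8) by (intro mult_right_mono) auto
  moreover have "0 < (s\<^sub>0 + 1) * (4 * C * k)"
    using assms(2,6,7) by simp
  ultimately have "m - \<eta> < m * (1 + -(s\<^sub>0 + k) * c)"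
    using assms(9) by (simp add: algebra_simps)
  also have "\<dots> \<le> m * exp (-(s\<^sub>0 + k) * c)"
    using m by (intro mult_left_mono exp_ge_add_one_self) simp
  also have "\<dots> \<le> f (s\<^sub>0 + k) * exp (-(s\<^sub>0 + k) * c)"
    using less by simp
  finally show "f s\<^sub>0 - \<eta> < f (s\<^sub>0 + k) * exp (-(s\<^sub>0 + k) * c)"
    by (simp add: m_def)
qed

lemma exists_tilting_parameters:
  fixes f :: "real \<Rightarrow> real"
  assumes pos: "\<And>t. 0 < f t" and "0 \<le> s\<^sub>0"
    and minimum: "\<And>t. f s\<^sub>0 \<le> f t" and strict: "\<And>t. s\<^sub>0 < t \<Longrightarrow> f s\<^sub>0 < f t"
    and second_difference: "\<And>h. \<bar>h\<bar> \<le> 1 \<Longrightarrow> f (s\<^sub>0 + h) + f (s\<^sub>0 - h) \<le> 2 * f s\<^sub>0 + C * h\<^sup>2"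
    and "0 < C" "0 < \<eta>"
  obtains s u h c where "0 \<le> s" "0 \<le> u" "0 \<le> h" "0 \<le> c"
    and "f (s - u) < f s" "f (s + h) * exp (-h * c) < f s" "f s\<^sub>0 - \<eta> < f s * exp (-s * c)"
proof -
  define k where "k = min (1/2) (\<eta> / (8 * C * (s\<^sub>0 + 1)))"
  have pos_denom: "0 < 8 * C * (s\<^sub>0 + 1)"
    using \<open>0 < C\<close> \<open>0 \<le> s\<^sub>0\<close> by simp
  then have "8 * C * (s\<^sub>0 + 1) * k \<le> 8 * C * (s\<^sub>0 + 1) * (\<eta> / (8 * C * (s\<^sub>0 + 1)))"
    by (intro mult_left_mono) (simp_all add: k_def)
  also have "\<dots> = \<eta>"
    using pos_denom by (simp add: field_simps less_imp_neq[symmetric])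
  finally have k: "0 < k" "k \<le> 1/2" "8 * C * (s\<^sub>0 + 1) * k \<le> \<eta>"
    using pos_denom \<open>0 < \<eta>\<close> by (simp_all add: k_def)
  note bounds = tilting_bounds[OF assms(1-6) k]
  show thesis
  proof (rule that[OF _ _ _ _ _ bounds])
    show "f (s\<^sub>0 + k - k) < f (s\<^sub>0 + k)"
      using k by (simp add: minimum strict)
  qed (use k \<open>0 \<le> s\<^sub>0\<close> \<open>0 < C\<close> pos[of s\<^sub>0] in simp_all)
qed

lemma div_ln_mono:
  fixes L x y :: real
  assumes "L < 0" "0 \<le> x" "x \<le> y" "y < 1"
  shows "L / ln x \<le> L / ln y"
proof (cases "x = 0")
  case True
  have "ln y \<le> 0"
    using assms by (cases "y = 0") auto
  then show ?thesis
    using True assms by (simp add: divide_nonpos_nonpos)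
next
  case False
  then show ?thesis
    using assms by (intro divide_left_mono_neg) (auto simp: mult_neg_neg)
qed

(* Since ln 0 = 0 in Isabelle, a vanishing rate contributes 0 to the maximum. *)
lemma max_div_ln_eq_div_ln_max:
  fixes L F G :: real
  assumes "L < 0" "0 \<le> F" "0 \<le> G" "F < 1" "G < 1"
  shows "max (L / ln F) (L / ln G) = L / ln (max F G)"
  using div_ln_mono[OF assms(1,2) _ assms(5)] div_ln_mono[OF assms(1,3) _ assms(4)]
  by (auto simp: max_def)

lemma log_ratio_eventually_gt:
  fixes N :: "real \<Rightarrow> real" and R a :: real
  assumes "0 < R" "R < 1" "a < 1"
    and upper: "eventually (\<lambda>\<delta>. 0 < N \<delta> \<and> N \<delta> \<le> ln (\<delta> / 2) / ln R + 1) (at_right 0)"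
  shows "eventually (\<lambda>\<delta>. a < (ln (\<delta> / 2) / ln R) / N \<delta>) (at_right 0)"
proof -
  define x where "x \<delta> = ln (\<delta> / 2) / ln R" for \<delta>
  have x_lim: "filterlim x at_top (at_right 0)"
    unfolding x_def using assms by real_asymp
  then have x_pos: "eventually (\<lambda>\<delta>. 0 < x \<delta>) (at_right 0)"
    by (simp add: filterlim_at_top_dense)
  have "((\<lambda>y::real. y / (y + 1)) \<longlongrightarrow> 1) at_top"
    by real_asymp
  from filterlim_compose[OF this x_lim]
  have "((\<lambda>\<delta>. x \<delta> / (x \<delta> + 1)) \<longlongrightarrow> 1) (at_right 0)" .
  from order_tendstoD(1)[OF this \<open>a < 1\<close>] x_pos upper
  show ?thesis
  proof eventually_elim
    case (elim \<delta>)
    then have "x \<delta> / (x \<delta> + 1) \<le> x \<delta> / N \<delta>"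
      by (intro divide_left_mono) (auto simp: x_def)
    then show ?case
      using elim unfolding x_def by linarith
  qed
qed

lemma log_ratio_eventually_lt:
  fixes N :: "real \<Rightarrow> real" and R b :: real
  assumes "0 < R" "R < 1" "1 < b"
    and lower: "\<And>\<rho>. 0 < \<rho> \<Longrightarrow> \<rho> < R \<Longrightarrow> eventually (\<lambda>\<delta>. ln \<delta> / ln \<rho> \<le> N \<delta>) (at_right 0)"
  shows "eventually (\<lambda>\<delta>. (ln (\<delta> / 2) / ln R) / N \<delta> < b) (at_right 0)"
proof -
  have "((\<lambda>\<rho>. ln \<rho> / ln R) \<longlongrightarrow> ln R / ln R) (at_left R)"
    using assms by (intro tendsto_intros) auto
  then have "eventually (\<lambda>\<rho>. ln \<rho> / ln R < b) (at_left R)"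
    using assms by (intro order_tendstoD(2)) auto
  moreover have "eventually (\<lambda>\<rho>. \<rho> \<in> {0<..<R}) (at_left R)"
    using assms by (intro eventually_at_left_real)
  ultimately have "eventually (\<lambda>\<rho>. ln \<rho> / ln R < b \<and> \<rho> \<in> {0<..<R}) (at_left R)"
    by (rule eventually_conj)
  then obtain \<rho> where \<rho>: "0 < \<rho>" "\<rho> < R" "ln \<rho> / ln R < b"
    using eventually_happens'[OF trivial_limit_at_left_real] by auto
  have "((\<lambda>\<delta>. ln (\<delta> / 2) / ln \<delta> * (ln \<rho> / ln R)) \<longlongrightarrow> 1 * (ln \<rho> / ln R)) (at_right 0)"
    by (intro tendsto_mult_right) real_asymp
  then have "eventually (\<lambda>\<delta>. ln (\<delta> / 2) / ln \<delta> * (ln \<rho> / ln R) < b) (at_right 0)"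
    using \<rho>(3) by (intro order_tendstoD(2)) auto
  moreover have "eventually (\<lambda>\<delta>. \<delta> \<in> {0<..<1}) (at_right (0::real))"
    by (rule eventually_at_right_real) simp
  ultimately show ?thesis
    using lower[OF \<rho>(1,2)]
  proof eventually_elim
    case (elim \<delta>)
    have "0 < ln (\<delta> / 2) / ln R" "0 < ln \<delta> / ln \<rho>"
      using elim \<rho> assms by (auto intro!: divide_neg_neg)
    then have "(ln (\<delta> / 2) / ln R) / N \<delta> \<le> (ln (\<delta> / 2) / ln R) / (ln \<delta> / ln \<rho>)"
      using elim by (intro divide_left_mono mult_pos_pos) auto
    also have "\<dots> = ln (\<delta> / 2) / ln \<delta> * (ln \<rho> / ln R)"
      by simp
    finally show ?case
      using elim by linarith
  qed
qed

lemma tendsto_log_ratio_one: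
  fixes N :: "real \<Rightarrow> real" and R :: real
  assumes "0 < R" "R < 1"
    and "eventually (\<lambda>\<delta>. 0 < N \<delta> \<and> N \<delta> \<le> ln (\<delta> / 2) / ln R + 1) (at_right 0)"
    and "\<And>\<rho>. 0 < \<rho> \<Longrightarrow> \<rho> < R \<Longrightarrow> eventually (\<lambda>\<delta>. ln \<delta> / ln \<rho> \<le> N \<delta>) (at_right 0)"
  shows "((\<lambda>\<delta>. (ln (\<delta> / 2) / ln R) / N \<delta>) \<longlongrightarrow> 1) (at_right 0)"
  using log_ratio_eventually_gt[OF assms(1,2) _ assms(3)] log_ratio_eventually_lt[OF assms(1,2) _ assms(4)]
  by (rule order_tendstoI)

definition least_sample_size :: "(nat \<Rightarrow> real) \<Rightarrow> real \<Rightarrow> nat" where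
  "least_sample_size P \<delta> = (LEAST n. 1 \<le> n \<and> P n < \<delta>)"

lemma least_sample_size:
  assumes "1 \<le> n" "P n < \<delta>"
  shows "1 \<le> least_sample_size P \<delta>" "P (least_sample_size P \<delta>) < \<delta>" "least_sample_size P \<delta> \<le> n"
  using LeastI[of "\<lambda>n. 1 \<le> n \<and> P n < \<delta>" n] Least_le[of "\<lambda>n. 1 \<le> n \<and> P n < \<delta>" n] assms
  unfolding least_sample_size_def by auto

lemma exists_sample_size_le_log:
  fixes R \<delta> :: real
  assumes "0 < R" "R < 1" "\<And>n. 1 \<le> n \<Longrightarrow> P n \<le> 2 * R ^ n" "0 < \<delta>" "\<delta> < 2"
  obtains n where "1 \<le> n" "P n < \<delta>" "real n \<le> ln (\<delta> / 2) / ln R + 1"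
proof -
  define x where "x = ln (\<delta> / 2) / ln R"
  have ln_R: "ln R < 0"
    using assms by simp
  have "0 < x"
    unfolding x_def using assms ln_R by (simp add: divide_neg_neg)
  define n where "n = nat \<lfloor>x\<rfloor> + 1"
  have n: "1 \<le> n" "x < real n" "real n \<le> x + 1"
    unfolding n_def using \<open>0 < x\<close> by linarith+
  have "real n * ln R < x * ln R"
    using n ln_R by (intro mult_strict_right_mono_neg) auto
  also have "x * ln R = ln (\<delta> / 2)"
    unfolding x_def using ln_R by simp
  finally have "R ^ n < \<delta> / 2"
    using assms by (simp add: ln_realpow[symmetric] ln_less_cancel_iff)
  then have "P n < \<delta>"
    using assms(3)[OF n(1)] by linarith
  with n show thesis
    unfolding x_def by (intro that) auto
qed

lemma eventually_log_le_least_sample_size: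
  fixes \<rho> :: real
  assumes "0 < \<rho>" "\<rho> < 1" "\<And>n. 1 \<le> n \<Longrightarrow> 0 < P n"
    and "eventually (\<lambda>n. \<rho> ^ n \<le> P n) sequentially"
    and "\<And>\<delta>. 0 < \<delta> \<Longrightarrow> \<delta> < 1 \<Longrightarrow> \<exists>n\<ge>1. P n < \<delta>"
  shows "eventually (\<lambda>\<delta>. ln \<delta> / ln \<rho> \<le> real (least_sample_size P \<delta>)) (at_right 0)"
proof -
  obtain n\<^sub>0 where n\<^sub>0: "\<And>n. n\<^sub>0 \<le> n \<Longrightarrow> \<rho> ^ n \<le> P n"
    using assms(4) unfolding eventually_sequentially by blast
  have "eventually (\<lambda>\<delta>. \<delta> < P n) (at_right 0)" if "n \<in> {1..<n\<^sub>0}" for n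
    using that assms(3) by (intro order_tendstoD(2)[OF tendsto_ident_at]) auto
  then have "eventually (\<lambda>\<delta>. \<forall>n\<in>{1..<n\<^sub>0}. \<delta> < P n) (at_right 0)"
    by (intro eventually_ball_finite) auto
  moreover have "eventually (\<lambda>\<delta>. \<delta> \<in> {0<..<1}) (at_right (0::real))"
    by (rule eventually_at_right_real) simp
  ultimately show ?thesis
  proof eventually_elim
    case (elim \<delta>)
    define N where "N = least_sample_size P \<delta>"
    obtain n where "1 \<le> n" "P n < \<delta>"
      using assms(5) elim by auto
    then have N: "1 \<le> N" "P N < \<delta>"
      unfolding N_def by (rule least_sample_size)+
    then have "n\<^sub>0 \<le> N"
      using elim by force
    then have "\<rho> ^ N < \<delta>"
      using n\<^sub>0 N by fastforce
    then have "real N * ln \<rho> < ln \<delta>"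
      using assms elim by (simp add: ln_realpow[symmetric] ln_less_cancel_iff)
    then show ?case
      unfolding N_def[symmetric] using assms by (simp add: divide_le_eq)
  qed
qed

lemma least_sample_size_ratio_tendsto_one:
  fixes R :: real
  assumes "0 < R" "R < 1"
    and upper: "\<And>n. 1 \<le> n \<Longrightarrow> P n \<le> 2 * R ^ n"
    and pos: "\<And>n. 1 \<le> n \<Longrightarrow> 0 < P n"
    and lower: "\<And>\<rho>. 0 < \<rho> \<Longrightarrow> \<rho> < R \<Longrightarrow> eventually (\<lambda>n. \<rho> ^ n \<le> P n) sequentially"
  shows "((\<lambda>\<delta>. (ln (\<delta> / 2) / ln R) / real (least_sample_size P \<delta>)) \<longlongrightarrow> 1) (at_right 0)"
proof (rule tendsto_log_ratio_one[OF assms(1,2)])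
  have "0 < real (least_sample_size P \<delta>) \<and> real (least_sample_size P \<delta>) \<le> ln (\<delta> / 2) / ln R + 1"
    if "\<delta> \<in> {0<..<1}" for \<delta>
  proof -
    have "0 < \<delta>" "\<delta> < 2"
      using that by auto
    then obtain n where "1 \<le> n" "P n < \<delta>" "real n \<le> ln (\<delta> / 2) / ln R + 1"
      using exists_sample_size_le_log[OF assms(1-3)] by blast
    then show ?thesis
      using least_sample_size[of n P \<delta>] by auto
  qed
  then show "eventually (\<lambda>\<delta>. 0 < real (least_sample_size P \<delta>)
      \<and> real (least_sample_size P \<delta>) \<le> ln (\<delta> / 2) / ln R + 1) (at_right 0)"
    using eventually_at_right_real[of 0 1] by (auto elim: eventually_mono)
  show "eventually (\<lambda>\<delta>. ln \<delta> / ln \<rho> \<le> real (least_sample_size P \<delta>)) (at_right 0)"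
    if "0 < \<rho>" "\<rho> < R" for \<rho>
  proof (rule eventually_log_le_least_sample_size[OF that(1) _ pos lower[OF that]])
    show "\<rho> < 1"
      using that assms by simp
    show "\<exists>n\<ge>1. P n < \<delta>" if "0 < \<delta>" "\<delta> < 1" for \<delta>
    proof -
      have "\<delta> < 2"
        using that by simp
      with exists_sample_size_le_log[OF assms(1-3) that(1)] show ?thesis
        by blast
    qed
  qed
qed

locale iid_mgf = prob_space M for M :: "'a measure" +
  fixes Y :: "nat \<Rightarrow> 'a \<Rightarrow> real"
  assumes indep: "indep_vars (\<lambda>_. borel) Y UNIV"
    and identically_distributed: "\<And>i. distr M borel (Y i) = distr M borel (Y 0)"
    and integrable_Y: "integrable M (Y 0)"
    and integrable_exp: "\<And>t. integrable M (\<lambda>\<omega>. exp (t * Y 0 \<omega>))"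
begin

lemma measurable_Y [measurable]: "Y i \<in> borel_measurable M"
  using indep unfolding indep_vars_def by auto

lemma integral_comp_Y:
  fixes g :: "real \<Rightarrow> real"
  assumes [measurable]: "g \<in> borel_measurable borel" and "integrable M (\<lambda>\<omega>. g (Y 0 \<omega>))"
  shows "integrable M (\<lambda>\<omega>. g (Y i \<omega>))" "(\<integral>\<omega>. g (Y i \<omega>) \<partial>M) = (\<integral>\<omega>. g (Y 0 \<omega>) \<partial>M)"
proof -
  have "integrable (distr M borel (Y i)) g"
    using assms(2) identically_distributed[of i] by (simp add: integrable_distr_eq)
  then show "integrable M (\<lambda>\<omega>. g (Y i \<omega>))"
    by (simp add: integrable_distr_eq)
  have "(\<integral>\<omega>. g (Y i \<omega>) \<partial>M) = integral\<^sup>L (distr M borel (Y i)) g"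
    by (simp add: integral_distr)
  also have "\<dots> = (\<integral>\<omega>. g (Y 0 \<omega>) \<partial>M)"
    by (simp add: identically_distributed[of i] integral_distr)
  finally show "(\<integral>\<omega>. g (Y i \<omega>) \<partial>M) = (\<integral>\<omega>. g (Y 0 \<omega>) \<partial>M)" .
qed

lemma integral_prod_comp_Y:
  fixes g :: "real \<Rightarrow> real"
  assumes [measurable]: "g \<in> borel_measurable borel" and "integrable M (\<lambda>\<omega>. g (Y 0 \<omega>))"
  shows "integrable M (\<lambda>\<omega>. \<Prod>i<n. g (Y i \<omega>))"
    and "(\<integral>\<omega>. (\<Prod>i<n. g (Y i \<omega>)) \<partial>M) = (\<integral>\<omega>. g (Y 0 \<omega>) \<partial>M) ^ n"
proof -
  have indep_g: "indep_vars (\<lambda>_. borel) (\<lambda>i \<omega>. g (Y i \<omega>)) {..<n}"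
    by (rule indep_vars_subset[OF indep_vars_compose2[OF indep]]) auto
  show "integrable M (\<lambda>\<omega>. \<Prod>i<n. g (Y i \<omega>))"
    by (rule indep_vars_integrable[OF _ indep_g]) (auto intro: integral_comp_Y(1)[OF assms])
  have "(\<integral>\<omega>. (\<Prod>i<n. g (Y i \<omega>)) \<partial>M) = (\<Prod>i<n. \<integral>\<omega>. g (Y i \<omega>) \<partial>M)"
    by (rule indep_vars_lebesgue_integral[OF _ indep_g]) (auto intro: integral_comp_Y(1)[OF assms])
  also have "\<dots> = (\<Prod>i<n. \<integral>\<omega>. g (Y 0 \<omega>) \<partial>M)"
    by (rule prod.cong[OF refl integral_comp_Y(2)[OF assms]])
  finally show "(\<integral>\<omega>. (\<Prod>i<n. g (Y i \<omega>)) \<partial>M) = (\<integral>\<omega>. g (Y 0 \<omega>) \<partial>M) ^ n"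
    by simp
qed

lemma iid_mgf_affine: "iid_mgf M (\<lambda>i \<omega>. a + b * Y i \<omega>)"
proof unfold_locales
  show "indep_vars (\<lambda>_. borel) (\<lambda>i \<omega>. a + b * Y i \<omega>) UNIV"
    by (rule indep_vars_compose2[OF indep]) simp
  show "distr M borel (\<lambda>\<omega>. a + b * Y i \<omega>) = distr M borel (\<lambda>\<omega>. a + b * Y 0 \<omega>)" for i
    using distr_distr[of "\<lambda>x. a + b * x" borel borel "Y i" M]
      distr_distr[of "\<lambda>x. a + b * x" borel borel "Y 0" M]
    by (simp add: identically_distributed[of i] comp_def)
  show "integrable M (\<lambda>\<omega>. a + b * Y 0 \<omega>)"
    using integrable_Y by simp
  have "integrable M (\<lambda>\<omega>. exp (t * a) * exp ((t * b) * Y 0 \<omega>))" for t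
    using integrable_exp by simp
  then show "integrable M (\<lambda>\<omega>. exp (t * (a + b * Y 0 \<omega>)))" for t
    by (simp add: distrib_left mult.assoc exp_add)
qed

definition mgf :: "real \<Rightarrow> real" where
  "mgf t = (\<integral>\<omega>. exp (t * Y 0 \<omega>) \<partial>M)"

definition rate :: real where
  "rate = (INF t\<in>{0<..}. mgf t)"

definition upper_tail :: "nat \<Rightarrow> real" where
  "upper_tail n = prob {\<omega> \<in> space M. 0 \<le> (\<Sum>i<n. Y i \<omega>)}"

lemma mgf_pos: "0 < mgf t"
proof -
  have "(\<integral>\<omega>. 0 \<partial>M) < mgf t"
    unfolding mgf_def by (rule integral_less_AE_space) (auto simp: integrable_exp emeasure_space_1)
  then show ?thesis
    by simp
qed

lemma mgf_0 [simp]: "mgf 0 = 1"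
  by (simp add: mgf_def prob_space)

lemma integral_exp_sum:
  shows "integrable M (\<lambda>\<omega>. exp (t * (\<Sum>i<n. Y i \<omega>)))"
    and "(\<integral>\<omega>. exp (t * (\<Sum>i<n. Y i \<omega>)) \<partial>M) = mgf t ^ n"
proof -
  have exp_sum: "exp (t * (\<Sum>i<n. Y i \<omega>)) = (\<Prod>i<n. exp (t * Y i \<omega>))" for \<omega>
    by (simp add: sum_distrib_left exp_sum)
  show "integrable M (\<lambda>\<omega>. exp (t * (\<Sum>i<n. Y i \<omega>)))"
    unfolding exp_sum by (rule integral_prod_comp_Y[where g = "\<lambda>y. exp (t * y)"]) (auto simp: integrable_exp)
  show "(\<integral>\<omega>. exp (t * (\<Sum>i<n. Y i \<omega>)) \<partial>M) = mgf t ^ n"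
    unfolding exp_sum mgf_def
    by (rule integral_prod_comp_Y[where g = "\<lambda>y. exp (t * y)"]) (auto simp: integrable_exp)
qed

lemma prob_eq_integral_indicator: "A \<in> events \<Longrightarrow> prob A = (\<integral>\<omega>. indicator A \<omega> \<partial>M)"
  by (simp add: sets.Int_space_eq2)

lemma prob_all_nonneg: "prob {\<omega> \<in> space M. \<forall>i<n. 0 \<le> Y i \<omega>} = prob {\<omega> \<in> space M. 0 \<le> Y 0 \<omega>} ^ n"
proof -
  define g :: "real \<Rightarrow> real" where "g y = (if 0 \<le> y then 1 else 0)" for y
  have [measurable]: "g \<in> borel_measurable borel"
    unfolding g_def by measurable
  have "prob {\<omega> \<in> space M. \<forall>i<n. 0 \<le> Y i \<omega>} = (\<integral>\<omega>. indicator {\<omega> \<in> space M. \<forall>i<n. 0 \<le> Y i \<omega>} \<omega> \<partial>M)"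
    by (rule prob_eq_integral_indicator) measurable
  also have "\<dots> = (\<integral>\<omega>. (\<Prod>i<n. g (Y i \<omega>)) \<partial>M)"
    by (rule Bochner_Integration.integral_cong) (auto simp: indicator_def g_def prod_zero_iff)
  also have "\<dots> = (\<integral>\<omega>. g (Y 0 \<omega>) \<partial>M) ^ n"
    by (rule integral_prod_comp_Y) (auto intro: integrable_const_bound[where B = 1] simp: g_def)
  also have "(\<integral>\<omega>. g (Y 0 \<omega>) \<partial>M) = (\<integral>\<omega>. indicator {\<omega> \<in> space M. 0 \<le> Y 0 \<omega>} \<omega> \<partial>M)"
    by (rule Bochner_Integration.integral_cong) (auto simp: indicator_def g_def)
  also have "\<dots> = prob {\<omega> \<in> space M. 0 \<le> Y 0 \<omega>}"
    by (rule prob_eq_integral_indicator[symmetric]) measurable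
  finally show ?thesis .
qed

lemma upper_tail_le_mgf_power:
  assumes "0 \<le> t"
  shows "upper_tail n \<le> mgf t ^ n"
proof -
  have "upper_tail n = (\<integral>\<omega>. indicator {\<omega> \<in> space M. 0 \<le> (\<Sum>i<n. Y i \<omega>)} \<omega> \<partial>M)"
    unfolding upper_tail_def by (rule prob_eq_integral_indicator) measurable
  also have "\<dots> \<le> (\<integral>\<omega>. exp (t * (\<Sum>i<n. Y i \<omega>)) \<partial>M)"
    using assms
    by (intro integral_mono integral_exp_sum integrable_real_indicator)
      (auto simp: indicator_def less_top[symmetric])
  also have "\<dots> = mgf t ^ n"
    by (rule integral_exp_sum)
  finally show ?thesis .
qed

lemma mgf_le_quadratic:
  assumes "\<bar>t\<bar> \<le> 1"
  shows "mgf t \<le> 1 + t * expectation (Y 0) + 4 * t\<^sup>2 * (mgf 2 + mgf (-2))"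
proof -
  have "mgf t \<le> (\<integral>\<omega>. 1 + t * Y 0 \<omega> + 4 * t\<^sup>2 * (exp (2 * Y 0 \<omega>) + exp (-2 * Y 0 \<omega>)) \<partial>M)"
    unfolding mgf_def using assms
    by (intro integral_mono exp_mult_le_quadratic integrable_exp Bochner_Integration.integrable_add
        integrable_mult_right integrable_const integrable_Y) auto
  also have "\<dots> = 1 + t * expectation (Y 0) + 4 * t\<^sup>2 * (mgf 2 + mgf (-2))"
    using integrable_Y integrable_exp[of 2] integrable_exp[of "-2"]
    by (simp add: mgf_def prob_space Bochner_Integration.integral_add)
  finally show ?thesis .
qed

lemma one_le_mgf:
  assumes "t \<le> 0" "expectation (Y 0) \<le> 0"
  shows "1 \<le> mgf t"
proof -
  have "1 \<le> 1 + t * expectation (Y 0)"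
    using assms by (simp add: mult_nonpos_nonpos)
  also have "\<dots> = (\<integral>\<omega>. 1 + t * Y 0 \<omega> \<partial>M)"
    using integrable_Y by (simp add: prob_space)
  also have "\<dots> \<le> mgf t"
    unfolding mgf_def
    by (intro integral_mono integrable_exp Bochner_Integration.integrable_add integrable_mult_right
        integrable_const integrable_Y exp_ge_add_one_self)
  finally show ?thesis .
qed

lemma convex_on_mgf: "convex_on UNIV mgf"
proof (rule convex_onI)
  fix l x y :: real
  assume l: "0 < l" "l < 1"
  have "mgf ((1 - l) *\<^sub>R x + l *\<^sub>R y) \<le> (\<integral>\<omega>. (1 - l) * exp (x * Y 0 \<omega>) + l * exp (y * Y 0 \<omega>) \<partial>M)"
    unfolding mgf_def
  proof (intro integral_mono integrable_exp Bochner_Integration.integrable_add integrable_mult_right)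
    fix \<omega>
    show "exp (((1 - l) *\<^sub>R x + l *\<^sub>R y) * Y 0 \<omega>) \<le> (1 - l) * exp (x * Y 0 \<omega>) + l * exp (y * Y 0 \<omega>)"
      using convex_onD[OF exp_convex, of l "x * Y 0 \<omega>" "y * Y 0 \<omega>"] l by (simp add: algebra_simps)
  qed
  also have "\<dots> = (1 - l) * mgf x + l * mgf y"
    using integrable_exp[of x] integrable_exp[of y] by (simp add: mgf_def)
  finally show "mgf ((1 - l) *\<^sub>R x + l *\<^sub>R y) \<le> (1 - l) * mgf x + l * mgf y" .
qed simp

lemma continuous_on_mgf: "continuous_on UNIV mgf"
  by (rule convex_on_continuous[OF open_UNIV convex_on_mgf])

lemma mgf_second_difference:
  assumes "\<bar>h\<bar> \<le> 1"
  shows "mgf (s + h) + mgf (s - h) \<le> 2 * mgf s + 8 * (mgf (s + 2) + mgf (s - 2)) * h\<^sup>2"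
proof -
  have "mgf (s + h) + mgf (s - h) = (\<integral>\<omega>. exp ((s + h) * Y 0 \<omega>) + exp ((s - h) * Y 0 \<omega>) \<partial>M)"
    using integrable_exp[of "s + h"] integrable_exp[of "s - h"] by (simp add: mgf_def)
  also have "\<dots> \<le> (\<integral>\<omega>. 2 * exp (s * Y 0 \<omega>)
      + 8 * h\<^sup>2 * (exp ((s + 2) * Y 0 \<omega>) + exp ((s - 2) * Y 0 \<omega>)) \<partial>M)"
    using assms
    by (intro integral_mono integrable_exp Bochner_Integration.integrable_add integrable_mult_right
        exp_second_difference_le)
  also have "\<dots> = 2 * mgf s + 8 * (mgf (s + 2) + mgf (s - 2)) * h\<^sup>2"
    using integrable_exp[of s] integrable_exp[of "s + 2"] integrable_exp[of "s - 2"]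
    by (simp add: mgf_def)
  finally show ?thesis .
qed

lemma upper_tail_ge_tilted:
  assumes "0 \<le> s" "0 \<le> u" "0 \<le> h" "0 \<le> K"
  shows "exp (-s * K) * (mgf s ^ n - mgf (s - u) ^ n - exp (-h * K) * mgf (s + h) ^ n) \<le> upper_tail n"
proof -
  define S where "S \<omega> = (\<Sum>i<n. Y i \<omega>)" for \<omega>
  have [measurable]: "S \<in> borel_measurable M"
    unfolding S_def by measurable
  have integrable: "integrable M (\<lambda>\<omega>. exp (t * S \<omega>))" for t
    unfolding S_def by (rule integral_exp_sum)
  have "exp (-s * K) * (mgf s ^ n - mgf (s - u) ^ n - exp (-h * K) * mgf (s + h) ^ n)
      = (\<integral>\<omega>. exp (-s * K) * (exp (s * S \<omega>) - exp ((s - u) * S \<omega>) - exp (-h * K) * exp ((s + h) * S \<omega>)) \<partial>M)"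
    using integrable[of s] integrable[of "s - u"] integrable[of "s + h"]
    by (simp add: S_def Bochner_Integration.integral_diff flip: integral_exp_sum(2))
  also have "\<dots> \<le> (\<integral>\<omega>. indicator {\<omega> \<in> space M. 0 \<le> S \<omega>} \<omega> \<partial>M)"
  proof (intro integral_mono integrable_mult_right Bochner_Integration.integrable_diff
      integrable_real_indicator integrable)
    show "exp (-s * K) * (exp (s * S \<omega>) - exp ((s - u) * S \<omega>) - exp (-h * K) * exp ((s + h) * S \<omega>))
        \<le> indicator {\<omega> \<in> space M. 0 \<le> S \<omega>} \<omega>" if "\<omega> \<in> space M" for \<omega>
    proof -
      have "exp (-h * K) * exp ((s + h) * S \<omega>) = exp ((s + h) * S \<omega> - h * K)"
        by (simp add: exp_diff exp_minus divide_inverse mult.commute)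
      then show ?thesis
        using tilted_kernel_le_indicator[OF assms, of "S \<omega>"] that
        by (cases "0 \<le> S \<omega>") (simp_all add: indicator_def)
    qed
  qed (auto simp: less_top[symmetric])
  also have "\<dots> = upper_tail n"
    unfolding upper_tail_def S_def by (rule prob_eq_integral_indicator[symmetric]) measurable
  finally show ?thesis .
qed

lemma bdd_below_mgf: "bdd_below (mgf ` A)"
  by (rule bdd_belowI[of _ 0]) (auto intro: less_imp_le mgf_pos)

lemma rate_le_mgf: "0 < t \<Longrightarrow> rate \<le> mgf t"
  unfolding rate_def by (rule cINF_lower[OF bdd_below_mgf]) simp

lemma le_rate: "(\<And>t. 0 < t \<Longrightarrow> a \<le> mgf t) \<Longrightarrow> a \<le> rate"
  unfolding rate_def by (rule cINF_greatest) auto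

lemma prob_nonneg_le_rate: "prob {\<omega> \<in> space M. 0 \<le> Y 0 \<omega>} \<le> rate"
proof (rule le_rate)
  show "prob {\<omega> \<in> space M. 0 \<le> Y 0 \<omega>} \<le> mgf t" if "0 < t" for t
    using upper_tail_le_mgf_power[of t 1] that by (simp add: upper_tail_def)
qed

lemma rate_less_one:
  assumes "expectation (Y 0) < 0"
  shows "rate < 1"
proof -
  define e where "e = expectation (Y 0)"
  define C where "C = mgf 2 + mgf (-2)"
  have "0 < C"
    unfolding C_def using mgf_pos[of 2] mgf_pos[of "-2"] by simp
  define t where "t = min (1/2) (-e / (8 * C))"
  have t: "0 < t" "t \<le> 1/2" "t \<le> -e / (8 * C)"
    using assms \<open>0 < C\<close> by (simp_all add: t_def e_def divide_neg_pos)
  have "4 * t * C \<le> 4 * (-e / (8 * C)) * C"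
    using t \<open>0 < C\<close> by (intro mult_right_mono mult_left_mono) auto
  also have "\<dots> < -e"
    using assms \<open>0 < C\<close> by (simp add: e_def)
  finally have "t * (4 * t * C) < t * (-e)"
    using t by (intro mult_strict_left_mono) auto
  then have "1 + t * e + 4 * t\<^sup>2 * C < 1"
    by (simp add: power2_eq_square algebra_simps)
  moreover have "mgf t \<le> 1 + t * e + 4 * t\<^sup>2 * C"
    using mgf_le_quadratic[of t] t by (simp add: e_def C_def)
  ultimately show ?thesis
    using rate_le_mgf[OF t(1)] by linarith
qed

lemma upper_tail_le_rate_power: "upper_tail n \<le> rate ^ n"
proof (cases "n = 0")
  case False
  have nonneg: "0 \<le> upper_tail n"
    by (simp add: upper_tail_def)
  have "root n (upper_tail n) \<le> rate"
  proof (rule le_rate)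
    fix t :: real
    assume "0 < t"
    then have "root n (upper_tail n) \<le> root n (mgf t ^ n)"
      using False upper_tail_le_mgf_power[of t n] by simp
    also have "\<dots> = mgf t"
      using False mgf_pos[of t] by (simp add: real_root_power_cancel)
    finally show "root n (upper_tail n) \<le> mgf t" .
  qed
  then have "root n (upper_tail n) ^ n \<le> rate ^ n"
    using nonneg by (intro power_mono real_root_ge_zero) auto
  then show ?thesis
    using False nonneg by simp
qed (simp add: upper_tail_def)

lemma prob_nonneg_power_le_upper_tail: "prob {\<omega> \<in> space M. 0 \<le> Y 0 \<omega>} ^ n \<le> upper_tail n"
  unfolding upper_tail_def prob_all_nonneg[symmetric]
  by (intro finite_measure_mono) (auto intro: sum_nonneg)

lemma mgf_eventually_gt_one:
  assumes "0 < prob {\<omega> \<in> space M. 0 < Y 0 \<omega>}"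
  obtains T where "0 < T" "\<And>t. T \<le> t \<Longrightarrow> 1 < mgf t"
proof -
  define E where "E = (\<integral>\<omega>. max 0 (Y 0 \<omega>) \<partial>M)"
  have integrable_pos: "integrable M (\<lambda>\<omega>. max 0 (Y 0 \<omega>))"
    using integrable_Y by simp
  have "0 < E"
  proof (rule ccontr)
    assume "\<not> 0 < E"
    then have "E = 0"
      unfolding E_def by (simp add: antisym)
    then have "AE \<omega> in M. max 0 (Y 0 \<omega>) = 0"
      unfolding E_def using integrable_pos by (subst (asm) integral_nonneg_eq_0_iff_AE) auto
    then have "AE \<omega> in M. \<not> 0 < Y 0 \<omega>"
      by (auto elim: AE_mp)
    then have "prob {\<omega> \<in> space M. 0 < Y 0 \<omega>} = 0"
      by (subst prob_eq_0) (auto elim: AE_mp)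
    with assms show False
      by simp
  qed
  have "1 < mgf t" if "2 / E \<le> t" for t
  proof -
    have "0 \<le> t"
      using that \<open>0 < E\<close> by (smt (verit) divide_pos_pos)
    have "1 < t * E"
      using that \<open>0 < E\<close> by (simp add: divide_le_eq)
    also have "\<dots> = (\<integral>\<omega>. t * max 0 (Y 0 \<omega>) \<partial>M)"
      by (simp add: E_def)
    also have "\<dots> \<le> mgf t"
      unfolding mgf_def
    proof (intro integral_mono integrable_mult_right integrable_pos integrable_exp)
      fix \<omega>
      have "t * Y 0 \<omega> \<le> exp (t * Y 0 \<omega>)"
        using exp_ge_add_one_self[of "t * Y 0 \<omega>"] by linarith
      then show "t * max 0 (Y 0 \<omega>) \<le> exp (t * Y 0 \<omega>)"
        by (simp add: max_def less_imp_le)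
    qed
    finally show ?thesis .
  qed
  then show thesis
    using \<open>0 < E\<close> by (intro that[of "2 / E"]) auto
qed

lemma rate_le_prob_nonneg:
  assumes "prob {\<omega> \<in> space M. 0 < Y 0 \<omega>} = 0"
  shows "rate \<le> prob {\<omega> \<in> space M. 0 \<le> Y 0 \<omega>}"
proof -
  define A where "A = {\<omega> \<in> space M. 0 \<le> Y 0 \<omega>}"
  have [measurable]: "A \<in> events"
    unfolding A_def by measurable
  have "AE \<omega> in M. Y 0 \<omega> \<le> 0"
    using assms by (subst AE_iff_measurable[of "{\<omega> \<in> space M. 0 < Y 0 \<omega>}"])
      (auto simp: emeasure_eq_measure)
  then have "AE \<omega> in M. (\<lambda>n. exp (real n * Y 0 \<omega>)) \<longlonglongrightarrow> indicator A \<omega>"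
  proof (rule AE_mp, intro AE_I2 impI)
    fix \<omega>
    assume "\<omega> \<in> space M" "Y 0 \<omega> \<le> 0"
    show "(\<lambda>n. exp (real n * Y 0 \<omega>)) \<longlonglongrightarrow> indicator A \<omega>"
    proof (cases "Y 0 \<omega> = 0")
      case False
      then have "(\<lambda>n. exp (Y 0 \<omega>) ^ n) \<longlonglongrightarrow> 0"
        using \<open>Y 0 \<omega> \<le> 0\<close> by (intro LIMSEQ_power_zero) simp
      then show ?thesis
        using False \<open>Y 0 \<omega> \<le> 0\<close> by (simp add: A_def exp_of_nat_mult[symmetric] mult.commute)
    qed (simp add: A_def \<open>\<omega> \<in> space M\<close>)
  qed
  moreover have "AE \<omega> in M. norm (exp (real n * Y 0 \<omega>)) \<le> 1" for n
    using \<open>AE \<omega> in M. Y 0 \<omega> \<le> 0\<close> by (auto elim: AE_mp simp: mult_nonneg_nonpos)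
  ultimately have "(\<lambda>n. mgf (real n)) \<longlonglongrightarrow> (\<integral>\<omega>. indicator A \<omega> \<partial>M)"
    unfolding mgf_def by (intro integral_dominated_convergence[where w = "\<lambda>_. 1"]) auto
  then have "(\<lambda>n. mgf (real n)) \<longlonglongrightarrow> prob A"
    by simp
  then show ?thesis
    unfolding A_def[symmetric]
    by (rule LIMSEQ_le_const) (auto intro!: exI[of _ 1] rate_le_mgf)
qed

lemma mgf_largest_minimizer:
  assumes "expectation (Y 0) < 0" "0 < prob {\<omega> \<in> space M. 0 < Y 0 \<omega>}"
  obtains s\<^sub>0 where "0 \<le> s\<^sub>0" "\<And>t. mgf s\<^sub>0 \<le> mgf t" "\<And>t. s\<^sub>0 < t \<Longrightarrow> mgf s\<^sub>0 < mgf t"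
    "rate \<le> mgf s\<^sub>0"
proof -
  obtain T where T: "0 < T" "\<And>t. T \<le> t \<Longrightarrow> 1 < mgf t"
    using mgf_eventually_gt_one assms(2) by blast
  obtain s\<^sub>0 where s\<^sub>0: "0 \<le> s\<^sub>0" "\<And>t. mgf s\<^sub>0 \<le> mgf t" "\<And>t. s\<^sub>0 < t \<Longrightarrow> mgf s\<^sub>0 < mgf t"
    using exists_largest_minimizer[OF continuous_on_mgf T(1)] one_le_mgf[OF _ less_imp_le[OF assms(1)]] T(2)
    by auto
  moreover have "rate \<le> mgf s\<^sub>0"
    using rate_le_mgf[of s\<^sub>0] rate_less_one[OF assms(1)] s\<^sub>0(1) by (cases "s\<^sub>0 = 0") auto
  ultimately show thesis
    by (rule that)
qed

lemma upper_tail_lower_bound: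
  assumes "expectation (Y 0) < 0" "0 < \<rho>" "\<rho> < rate"
  shows "eventually (\<lambda>n. \<rho> ^ n \<le> upper_tail n) sequentially"
proof (cases "prob {\<omega> \<in> space M. 0 < Y 0 \<omega>} = 0")
  case True
  then have "\<rho> \<le> prob {\<omega> \<in> space M. 0 \<le> Y 0 \<omega>}"
    using rate_le_prob_nonneg assms by linarith
  from power_mono[OF this less_imp_le[OF assms(2)]]
  have "\<rho> ^ n \<le> upper_tail n" for n
    using prob_nonneg_power_le_upper_tail[of n] by (rule order_trans)
  then show ?thesis
    by simp
next
  case False
  then have "0 < prob {\<omega> \<in> space M. 0 < Y 0 \<omega>}"
    using measure_nonneg[of M "{\<omega> \<in> space M. 0 < Y 0 \<omega>}"] by linarith
  then obtain s\<^sub>0 where s\<^sub>0: "0 \<le> s\<^sub>0" "\<And>t. mgf s\<^sub>0 \<le> mgf t" "\<And>t. s\<^sub>0 < t \<Longrightarrow> mgf s\<^sub>0 < mgf t"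
    and "rate \<le> mgf s\<^sub>0"
    using mgf_largest_minimizer assms(1) by blast
  define C where "C = 8 * (mgf (s\<^sub>0 + 2) + mgf (s\<^sub>0 - 2))"
  have "0 < C"
    unfolding C_def using mgf_pos[of "s\<^sub>0 + 2"] mgf_pos[of "s\<^sub>0 - 2"] by simp
  have "0 < rate - \<rho>"
    using assms by simp
  then obtain s u h c where param: "0 \<le> s" "0 \<le> u" "0 \<le> h" "0 \<le> c"
    "mgf (s - u) < mgf s" "mgf (s + h) * exp (-h * c) < mgf s" "mgf s\<^sub>0 - (rate - \<rho>) < mgf s * exp (-s * c)"
    using exists_tilting_parameters[OF mgf_pos s\<^sub>0 mgf_second_difference \<open>0 < C\<close>[unfolded C_def]] by blast
  define q where "q = exp (-s * c)"
  have "eventually (\<lambda>n. \<rho> ^ n \<le> (mgf s * q) ^ n - (mgf (s - u) * q) ^ n - (mgf (s + h) * exp (-h * c) * q) ^ n)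
      sequentially"
    using param \<open>rate \<le> mgf s\<^sub>0\<close> assms(2) mgf_pos[of "s - u"] mgf_pos[of "s + h"]
    by (intro eventually_power_le_power_diff) (simp_all add: q_def)
  then show ?thesis
  proof eventually_elim
    case (elim n)
    have "exp (-s * (real n * c)) = q ^ n" "exp (-h * (real n * c)) = exp (-h * c) ^ n"
      unfolding q_def by (simp_all flip: exp_of_nat_mult add: algebra_simps)
    then have "(mgf s * q) ^ n - (mgf (s - u) * q) ^ n - (mgf (s + h) * exp (-h * c) * q) ^ n
        = exp (-s * (real n * c)) * (mgf s ^ n - mgf (s - u) ^ n - exp (-h * (real n * c)) * mgf (s + h) ^ n)"
      by (simp add: power_mult_distrib algebra_simps)
    also have "\<dots> \<le> upper_tail n"
      using param by (intro upper_tail_ge_tilted) auto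
    finally show ?case
      using elim by linarith
  qed
qed

end

locale sample_mean_deviation = iid_mgf +
  fixes \<mu> \<epsilon> :: real
  assumes mean: "\<mu> = expectation (Y 0)"
    and eps_pos: "0 < \<epsilon>"
    and nondegenerate: "0 < prob {\<omega> \<in> space M. \<epsilon> \<le> \<bar>Y 0 \<omega> - \<mu>\<bar>}"
begin

(* Written in the form a + b * Y i so that iid_mgf_affine applies literally. *)
sublocale below: iid_mgf M "\<lambda>i \<omega>. (\<mu> - \<epsilon>) + -1 * Y i \<omega>"
  by (rule iid_mgf_affine)

sublocale above: iid_mgf M "\<lambda>i \<omega>. -(\<mu> + \<epsilon>) + 1 * Y i \<omega>"
  by (rule iid_mgf_affine)

definition deviation_rate :: real where
  "deviation_rate = max below.rate above.rate"

definition deviation_prob :: "nat \<Rightarrow> real" where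
  "deviation_prob n = prob {\<omega> \<in> space M. \<epsilon> \<le> \<bar>sample_mean Y n \<omega> - \<mu>\<bar>}"

lemma shifted_means_neg:
  "expectation (\<lambda>\<omega>. (\<mu> - \<epsilon>) + -1 * Y 0 \<omega>) < 0"
  "expectation (\<lambda>\<omega>. -(\<mu> + \<epsilon>) + 1 * Y 0 \<omega>) < 0"
  using integrable_Y eps_pos by (simp_all add: mean prob_space)

lemma chernoff_F_eq: "chernoff_F M (Y 0) \<mu> \<epsilon> = below.rate"
proof -
  have "chernoff_F M (Y 0) \<mu> \<epsilon> = (INF t\<in>uminus ` {0<..}. \<integral>\<omega>. exp (t * (Y 0 \<omega> - \<mu> + \<epsilon>)) \<partial>M)"
    by (simp add: chernoff_F_def)
  also have "\<dots> = below.rate"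
    unfolding below.rate_def below.mgf_def INF_image comp_def
    by (intro INF_cong refl Bochner_Integration.integral_cong) (simp add: algebra_simps)
  finally show ?thesis .
qed

lemma chernoff_G_eq: "chernoff_G M (Y 0) \<mu> \<epsilon> = above.rate"
  unfolding chernoff_G_def above.rate_def above.mgf_def
  by (intro INF_cong refl Bochner_Integration.integral_cong) (simp add: algebra_simps)

lemma deviation_event:
  assumes "1 \<le> n"
  shows "{\<omega> \<in> space M. \<epsilon> \<le> \<bar>sample_mean Y n \<omega> - \<mu>\<bar>}
    = {\<omega> \<in> space M. 0 \<le> (\<Sum>i<n. (\<mu> - \<epsilon>) + -1 * Y i \<omega>)}
      \<union> {\<omega> \<in> space M. 0 \<le> (\<Sum>i<n. -(\<mu> + \<epsilon>) + 1 * Y i \<omega>)}"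
proof -
  have "\<epsilon> \<le> \<bar>s / real n - \<mu>\<bar> \<longleftrightarrow> 0 \<le> real n * (\<mu> - \<epsilon>) - s \<or> 0 \<le> s - real n * (\<mu> + \<epsilon>)" for s
  proof -
    have "\<epsilon> \<le> \<bar>s / real n - \<mu>\<bar> \<longleftrightarrow> s / real n \<le> \<mu> - \<epsilon> \<or> \<mu> + \<epsilon> \<le> s / real n"
      by (auto simp: abs_if)
    also have "\<dots> \<longleftrightarrow> s \<le> real n * (\<mu> - \<epsilon>) \<or> real n * (\<mu> + \<epsilon>) \<le> s"
      using assms by (simp add: pos_divide_le_eq pos_le_divide_eq mult.commute)
    finally show ?thesis
      by linarith
  qed
  moreover have "(\<Sum>i<n. (\<mu> - \<epsilon>) + -1 * Y i \<omega>) = real n * (\<mu> - \<epsilon>) - (\<Sum>i<n. Y i \<omega>)"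
    "(\<Sum>i<n. -(\<mu> + \<epsilon>) + 1 * Y i \<omega>) = (\<Sum>i<n. Y i \<omega>) - real n * (\<mu> + \<epsilon>)" for \<omega>
    by (simp_all add: sum_subtractf sum.distrib algebra_simps)
  ultimately show ?thesis
    by (auto simp: sample_mean_def)
qed

lemma upper_tails_le_deviation_prob:
  assumes "1 \<le> n"
  shows "below.upper_tail n \<le> deviation_prob n" "above.upper_tail n \<le> deviation_prob n"
  unfolding below.upper_tail_def above.upper_tail_def deviation_prob_def deviation_event[OF assms]
  by (intro finite_measure_mono; measurable)+

lemma rates_nonneg: "0 \<le> below.rate" "0 \<le> above.rate"
  using below.prob_nonneg_le_rate above.prob_nonneg_le_rate by (auto intro: order.trans[OF measure_nonneg])

lemma deviation_prob_le:
  assumes "1 \<le> n"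
  shows "deviation_prob n \<le> 2 * deviation_rate ^ n"
proof -
  have "deviation_prob n \<le> below.upper_tail n + above.upper_tail n"
    unfolding below.upper_tail_def above.upper_tail_def deviation_prob_def deviation_event[OF assms]
    by (intro measure_Un_le) measurable
  also have "\<dots> \<le> below.rate ^ n + above.rate ^ n"
    by (intro add_mono below.upper_tail_le_rate_power above.upper_tail_le_rate_power)
  also have "\<dots> \<le> deviation_rate ^ n + deviation_rate ^ n"
    using rates_nonneg unfolding deviation_rate_def by (intro add_mono power_mono) auto
  finally show ?thesis
    by simp
qed

lemma max_prob_nonneg_pos:
  "0 < max (prob {\<omega> \<in> space M. 0 \<le> (\<mu> - \<epsilon>) + -1 * Y 0 \<omega>}) (prob {\<omega> \<in> space M. 0 \<le> -(\<mu> + \<epsilon>) + 1 * Y 0 \<omega>})"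
proof -
  have "prob {\<omega> \<in> space M. \<epsilon> \<le> \<bar>Y 0 \<omega> - \<mu>\<bar>}
      \<le> prob ({\<omega> \<in> space M. 0 \<le> (\<mu> - \<epsilon>) + -1 * Y 0 \<omega>} \<union> {\<omega> \<in> space M. 0 \<le> -(\<mu> + \<epsilon>) + 1 * Y 0 \<omega>})"
    by (intro finite_measure_mono) auto
  also have "\<dots> \<le> prob {\<omega> \<in> space M. 0 \<le> (\<mu> - \<epsilon>) + -1 * Y 0 \<omega>} + prob {\<omega> \<in> space M. 0 \<le> -(\<mu> + \<epsilon>) + 1 * Y 0 \<omega>}"
    by (intro measure_Un_le) measurable
  finally show ?thesis
    using nondegenerate by linarith
qed

lemma deviation_rate_bounds: "0 < deviation_rate" "deviation_rate < 1"
  using max_prob_nonneg_pos below.prob_nonneg_le_rate above.prob_nonneg_le_rate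
    below.rate_less_one[OF shifted_means_neg(1)] above.rate_less_one[OF shifted_means_neg(2)]
  by (auto simp: deviation_rate_def)

lemma deviation_prob_pos:
  assumes "1 \<le> n"
  shows "0 < deviation_prob n"
proof -
  define q where "q = max (prob {\<omega> \<in> space M. 0 \<le> (\<mu> - \<epsilon>) + -1 * Y 0 \<omega>})
    (prob {\<omega> \<in> space M. 0 \<le> -(\<mu> + \<epsilon>) + 1 * Y 0 \<omega>})"
  have "q ^ n \<le> deviation_prob n"
    using below.prob_nonneg_power_le_upper_tail[of n] above.prob_nonneg_power_le_upper_tail[of n]
      upper_tails_le_deviation_prob[OF assms]
    unfolding q_def max_def by (auto split: if_splits)
  moreover have "0 < q ^ n"
    using max_prob_nonneg_pos by (simp add: q_def)
  ultimately show ?thesis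
    by linarith
qed

lemma deviation_prob_lower_bound:
  assumes "0 < \<rho>" "\<rho> < deviation_rate"
  shows "eventually (\<lambda>n. \<rho> ^ n \<le> deviation_prob n) sequentially"
proof -
  have "eventually (\<lambda>n. \<rho> ^ n \<le> below.upper_tail n \<or> \<rho> ^ n \<le> above.upper_tail n) sequentially"
  proof (cases "above.rate \<le> below.rate")
    case True
    then show ?thesis
      using below.upper_tail_lower_bound[OF shifted_means_neg(1) assms(1)] assms(2)
      by (auto simp: deviation_rate_def elim: eventually_mono)
  next
    case False
    then show ?thesis
      using above.upper_tail_lower_bound[OF shifted_means_neg(2) assms(1)] assms(2)
      by (auto simp: deviation_rate_def elim: eventually_mono)
  qed
  then show ?thesis
    using eventually_ge_at_top[of 1]
    by eventually_elim (use upper_tails_le_deviation_prob in force)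
qed

lemma N_a_eq: "N_a M Y \<mu> \<epsilon> \<delta> = least_sample_size deviation_prob \<delta>"
proof -
  have "prob {\<omega> \<in> space M. \<bar>sample_mean Y n \<omega> - \<mu>\<bar> < \<epsilon>} = 1 - deviation_prob n" for n
  proof -
    have "{\<omega> \<in> space M. \<bar>sample_mean Y n \<omega> - \<mu>\<bar> < \<epsilon>}
        = space M - {\<omega> \<in> space M. \<epsilon> \<le> \<bar>sample_mean Y n \<omega> - \<mu>\<bar>}"
      by auto
    then show ?thesis
      unfolding deviation_prob_def by (simp add: prob_compl sample_mean_def)
  qed
  then show ?thesis
    by (simp add: N_a_def least_sample_size_def)
qed

lemma N_c_eq:
  assumes "0 < \<delta>" "\<delta> < 1"
  shows "N_c M (Y 0) \<mu> \<epsilon> \<delta> = ln (\<delta> / 2) / ln deviation_rate"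
  unfolding N_c_def chernoff_F_eq chernoff_G_eq deviation_rate_def
  using assms rates_nonneg below.rate_less_one[OF shifted_means_neg(1)] above.rate_less_one[OF shifted_means_neg(2)]
  by (intro max_div_ln_eq_div_ln_max) auto

lemma N_c_div_N_a_tendsto_one:
  "((\<lambda>\<delta>. N_c M (Y 0) \<mu> \<epsilon> \<delta> / real (N_a M Y \<mu> \<epsilon> \<delta>)) \<longlongrightarrow> 1) (at_right 0)"
proof -
  have "((\<lambda>\<delta>. (ln (\<delta> / 2) / ln deviation_rate) / real (least_sample_size deviation_prob \<delta>)) \<longlongrightarrow> 1) (at_right 0)"
    using deviation_rate_bounds deviation_prob_le deviation_prob_pos deviation_prob_lower_bound
    by (intro least_sample_size_ratio_tendsto_one)
  moreover have "eventually (\<lambda>\<delta>. (ln (\<delta> / 2) / ln deviation_rate) / real (least_sample_size deviation_prob \<delta>)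
      = N_c M (Y 0) \<mu> \<epsilon> \<delta> / real (N_a M Y \<mu> \<epsilon> \<delta>)) (at_right 0)"
    using eventually_at_right_real[OF zero_less_one] by eventually_elim (simp add: N_c_eq N_a_eq)
  ultimately show ?thesis
    by (rule Lim_transform_eventually)
qed

end

theorem theorem8:
  fixes M :: "'a measure" and X :: "nat \<Rightarrow> 'a \<Rightarrow> real" and \<mu> \<epsilon> :: real
  assumes "prob_space M"
    and "prob_space.indep_vars M (\<lambda>_. borel) X UNIV"
    and "\<And>i. distr M borel (X i) = distr M borel (X 0)"
    and "integrable M (X 0)"
    and "\<mu> = integral\<^sup>L M (X 0)"
    and "\<And>t::real. integrable M (\<lambda>\<omega>. exp (t * X 0 \<omega>))"
    and "\<epsilon> > 0"
    and "measure M {\<omega> \<in> space M. \<bar>X 0 \<omega> - \<mu>\<bar> \<ge> \<epsilon>} > 0"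
  shows "((\<lambda>\<delta>. N_c M (X 0) \<mu> \<epsilon> \<delta> / real (N_a M X \<mu> \<epsilon> \<delta>)) \<longlongrightarrow> 1) (at_right 0)"
proof -
  interpret sample_mean_deviation M X \<mu> \<epsilon>
    using assms by (intro sample_mean_deviation.intro iid_mgf.intro sample_mean_deviation_axioms.intro
      iid_mgf_axioms.intro) auto
  show ?thesis
    by (rule N_c_div_N_a_tendsto_one)
qed

end
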